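(* Let $(X,d)$ be an $F$-space with non-decreasing metric $d$, and let $\{X_n\}$ be a nontrivial linear approximation scheme on $X$ with $\dim X_n<\infty$ for all $n$. Writing $\|x\|=d(x,0)$, if $$R_{\|\cdot\|}\Big(\bigcup_n X_n\Big)>0,$$ then $\inf_n E(X,X_n)>0$ and $\{X_n\}$ satisfies Shapiro's theorem on $X$.
   Context: An $F$-space is a complete metric vector space with translation-invariant metric $d$. The metric is non-decreasing if $d(\alpha x,0)\le d(x,0)$ for $0\le\alpha\le1$. A nontrivial linear approximation scheme is a chain $X_0\subsetneq X_1\subsetneq\cdots\subsetneq X$ of linear subspaces (strict inclusions) with $\bigcup_nX_n$ dense in $X$. For a linear subspace $V\subseteq X$, its radius is $R_{\|\cdot\|}(V)=\inf_{v\in V\setminus\{0\}}\sup_{t>0}\|tv\|$ (possibly $+\infty$). $E(x,A)=\inf_{a\in A}d(x,a)$ and $E(X,A)=\sup_{x\in X}E(x,A)$. $\{X_n\}$ satisfies Shapiro's theorem on $X$ if for every non-increasing sequence $\{\varepsilon_n\}$ of nonnegative reals tending to $0$ there exists $x\in X$ with $E(x,X_n)\neq\mathbf{O}(\varepsilon_n)$. *)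

theory Defs
  imports "HOL-Analysis.Analysis" "HOL-Library.Landau_Symbols"
begin

definition metric_vector_space :: "('a::real_vector \<Rightarrow> 'a \<Rightarrow> real) \<Rightarrow> bool" where
  "metric_vector_space d \<longleftrightarrow>
     (\<forall>x y. d x y = 0 \<longleftrightarrow> x = y) \<and>
     (\<forall>x y. d x y = d y x) \<and>
     (\<forall>x y z. d x z \<le> d x y + d y z) \<and>
     (\<forall>x y z. d (x + z) (y + z) = d x y) \<and>
     (\<forall>s t x y. (\<lambda>n. d (s n) x) \<longlonglongrightarrow> 0 \<and> (\<lambda>n. d (t n) y) \<longlonglongrightarrow> 0
        \<longrightarrow> (\<lambda>n. d (s n + t n) (x + y)) \<longlonglongrightarrow> 0) \<and>
     (\<forall>a s c x. a \<longlonglongrightarrow> c \<and> (\<lambda>n. d (s n) x) \<longlonglongrightarrow> 0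
        \<longrightarrow> (\<lambda>n. d (a n *\<^sub>R s n) (c *\<^sub>R x)) \<longlonglongrightarrow> 0)"

definition F_space :: "('a::real_vector \<Rightarrow> 'a \<Rightarrow> real) \<Rightarrow> bool" where
  "F_space d \<longleftrightarrow> metric_vector_space d \<and>
     (\<forall>s::nat \<Rightarrow> 'a. (\<forall>e>0. \<exists>N. \<forall>m\<ge>N. \<forall>n\<ge>N. d (s m) (s n) < e)
        \<longrightarrow> (\<exists>l. (\<lambda>n. d (s n) l) \<longlonglongrightarrow> 0))"

definition nondecreasing_metric :: "('a::real_vector \<Rightarrow> 'a \<Rightarrow> real) \<Rightarrow> bool" where
  "nondecreasing_metric d \<longleftrightarrow> (\<forall>x \<alpha>. 0 \<le> \<alpha> \<and> \<alpha> \<le> 1 \<longrightarrow> d (\<alpha> *\<^sub>R x) 0 \<le> d x 0)"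

definition nontrivial_linear_approx_scheme ::
  "('a::real_vector \<Rightarrow> 'a \<Rightarrow> real) \<Rightarrow> (nat \<Rightarrow> 'a set) \<Rightarrow> bool" where
  "nontrivial_linear_approx_scheme d X \<longleftrightarrow>
     (\<forall>n. subspace (X n)) \<and> (\<forall>n. X n \<subset> X (Suc n)) \<and>
     (\<forall>x. \<forall>e>0. \<exists>y\<in>(\<Union>n. X n). d x y < e)"

definition radius :: "('a::real_vector \<Rightarrow> real) \<Rightarrow> 'a set \<Rightarrow> ereal" where
  "radius nrm V = (INF v\<in>V - {0}. SUP t\<in>{0<..}. ereal (nrm (t *\<^sub>R v)))"

definition Edist :: "('a \<Rightarrow> 'a \<Rightarrow> real) \<Rightarrow> 'a \<Rightarrow> 'a set \<Rightarrow> real" where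
  "Edist d x A = (INF a\<in>A. d x a)"

definition Edist_space :: "('a \<Rightarrow> 'a \<Rightarrow> real) \<Rightarrow> 'a set \<Rightarrow> ereal" where
  "Edist_space d A = (SUP x\<in>UNIV. ereal (Edist d x A))"

definition satisfies_Shapiro :: "('a \<Rightarrow> 'a \<Rightarrow> real) \<Rightarrow> (nat \<Rightarrow> 'a set) \<Rightarrow> bool" where
  "satisfies_Shapiro d X \<longleftrightarrow>
     (\<forall>eps::nat \<Rightarrow> real. decseq eps \<and> (\<forall>n. 0 \<le> eps n) \<and> eps \<longlonglongrightarrow> 0 \<longrightarrow>
        (\<exists>x. (\<lambda>n. Edist d x (X n)) \<notin> O(eps)))"

end

theory Submission
  imports Defs
begin

(* Choose 0 < c below the radius. Each X n has a point y at distance at least c: otherwise, for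
   v \<in> X (Suc n) - X n, the vectors k v - a_k with a_k \<in> X n would all be shorter than c, and
   compactness of the l1-unit sphere of the finite-dimensional space spanned by v and X n yields a
   nonzero u in it whose multiples t u all have length at most c, contradicting the radius bound.
   This gives inf E(X, X n) \<ge> c. For Shapiro's theorem, if every x had E(x, X n) = O(\<epsilon> n), then
   by Baire's theorem some ball {z. \<parallel>z\<parallel> < \<rho>} would satisfy E(z, X n) \<le> C \<epsilon> n uniformly for
   large n; but t \<mapsto> E(t y, X n) is continuous, so it takes any value \<eta> \<le> c, and translating
   t y by a near-best approximation from X n gives a vector of length < 2\<eta> at distance \<eta>
   from X n, which is impossible once C \<epsilon> n < \<eta>. *)

lemma radius_gt_imp_exists_scaleR_gt:
  assumes "ereal c < radius nrm V" "v \<in> V" "v \<noteq> 0"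
  shows "\<exists>t>0. c < nrm (t *\<^sub>R v)"
proof -
  have "radius nrm V \<le> (SUP t\<in>{0<..}. ereal (nrm (t *\<^sub>R v)))"
    unfolding radius_def using assms(2,3) by (intro INF_lower) auto
  with assms(1) have "ereal c < (SUP t\<in>{0<..}. ereal (nrm (t *\<^sub>R v)))" by order
  then show ?thesis unfolding less_SUP_iff by auto
qed

lemma bounded_family_convergent_subseq:
  fixes f :: "nat \<Rightarrow> 'b \<Rightarrow> real"
  assumes "finite S" "\<And>k x. x \<in> S \<Longrightarrow> \<bar>f k x\<bar> \<le> B"
  obtains r where "strict_mono r" "\<And>x. x \<in> S \<Longrightarrow> convergent (\<lambda>k. f (r k) x)"
  using assms
proof (induction S arbitrary: thesis rule: finite_induct)
  case empty
  then show ?case by (metis strict_mono_id empty_iff)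
next
  case (insert y S)
  then obtain r where r: "strict_mono r" "\<And>x. x \<in> S \<Longrightarrow> convergent (\<lambda>k. f (r k) x)"
    by (metis insertCI)
  have "\<forall>k. f (r k) y \<in> {-B..B}"
    using insert.prems(2)[of y] by (auto simp: abs_le_iff minus_le_iff)
  then obtain l r' where r': "strict_mono r'" "((\<lambda>k. f (r k) y) \<circ> r') \<longlonglongrightarrow> l"
    using compact_imp_seq_compact[OF compact_Icc] by (metis seq_compactE)
  show ?case
  proof (rule insert.prems(1))
    show "strict_mono (r \<circ> r')" using r r' by (simp add: strict_mono_o)
    fix x assume "x \<in> insert y S"
    then show "convergent (\<lambda>k. f ((r \<circ> r') k) x)"
    proof
      assume "x = y"
      then show ?thesis using r' by (auto simp: o_def convergent_def)
    next
      assume "x \<in> S"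
      then have "convergent ((\<lambda>k. f (r k) x) \<circ> r')"
        using r(2) r'(1) by (metis convergent_def LIMSEQ_subseq_LIMSEQ)
      then show ?thesis by (simp add: o_def)
    qed
  qed
qed

locale nondecreasing_F_space =
  fixes d :: "'a::real_vector \<Rightarrow> 'a \<Rightarrow> real"
  assumes F_space: "F_space d" and nondecreasing: "nondecreasing_metric d"
begin

lemma metric_vector_space: "metric_vector_space d"
  using F_space unfolding F_space_def by blast

lemma d_eq_0_iff [simp]: "d x y = 0 \<longleftrightarrow> x = y"
  and d_commute: "d x y = d y x"
  and d_triangle: "d x z \<le> d x y + d y z"
  and d_translate: "d (x + z) (y + z) = d x y"
  and tendsto_d_add: "(\<lambda>n. d (s n) x) \<longlonglongrightarrow> 0 \<Longrightarrow> (\<lambda>n. d (t n) y) \<longlonglongrightarrow> 0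
        \<Longrightarrow> (\<lambda>n. d (s n + t n) (x + y)) \<longlonglongrightarrow> 0"
  and tendsto_d_scaleR: "a \<longlonglongrightarrow> b \<Longrightarrow> (\<lambda>n. d (s n) x) \<longlonglongrightarrow> 0
        \<Longrightarrow> (\<lambda>n. d (a n *\<^sub>R s n) (b *\<^sub>R x)) \<longlonglongrightarrow> 0"
  using metric_vector_space unfolding metric_vector_space_def by blast+

lemma d_self [simp]: "d x x = 0"
  by simp

lemma d_nonneg [simp]: "0 \<le> d x y"
  using d_triangle[of x x y] d_commute[of x y] by simp

lemma d_eq_d_diff_0: "d x y = d (x - y) 0"
  using d_translate[of "x - y" y 0] by simp

lemma d_uminus_0: "d (- x) 0 = d x 0"
  using d_translate[of "- x" x 0] d_commute[of 0 x] by simp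

lemma d_scaleR_mono:
  assumes "0 \<le> s" "s \<le> t"
  shows "d (s *\<^sub>R x) 0 \<le> d (t *\<^sub>R x) 0"
proof (cases "t = 0")
  case True
  with assms show ?thesis by simp
next
  case False
  then have "s *\<^sub>R x = (s / t) *\<^sub>R (t *\<^sub>R x)" by simp
  moreover have "0 \<le> s / t" "s / t \<le> 1" using assms False by auto
  ultimately show ?thesis using nondecreasing unfolding nondecreasing_metric_def by metis
qed

lemma tendsto_d_scaleR_const: "a \<longlonglongrightarrow> b \<Longrightarrow> (\<lambda>n. d (a n *\<^sub>R x) (b *\<^sub>R x)) \<longlonglongrightarrow> 0"
  using tendsto_d_scaleR[of a b "\<lambda>_. x" x] by simp

lemma tendsto_d_sum:
  assumes "finite S" "\<And>x. x \<in> S \<Longrightarrow> (\<lambda>n. a n x) \<longlonglongrightarrow> g x"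
  shows "(\<lambda>n. d (\<Sum>x\<in>S. a n x *\<^sub>R x) (\<Sum>x\<in>S. g x *\<^sub>R x)) \<longlonglongrightarrow> 0"
  using assms
proof (induction S rule: finite_induct)
  case empty
  then show ?case by simp
next
  case (insert y S)
  have "(\<lambda>n. d (a n y *\<^sub>R y + (\<Sum>x\<in>S. a n x *\<^sub>R x)) (g y *\<^sub>R y + (\<Sum>x\<in>S. g x *\<^sub>R x))) \<longlonglongrightarrow> 0"
    using insert by (intro tendsto_d_add tendsto_d_scaleR_const) auto
  with insert.hyps show ?case by simp
qed

lemma tendsto_d_0:
  assumes "(\<lambda>n. d (s n) x) \<longlonglongrightarrow> 0"
  shows "(\<lambda>n. d (s n) 0) \<longlonglongrightarrow> d x 0"
proof -
  have "\<bar>d (s n) 0 - d x 0\<bar> \<le> d (s n) x" for n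
    using d_triangle[of "s n" 0 x] d_triangle[of x 0 "s n"] d_commute[of x "s n"] by simp
  then have "(\<lambda>n. d (s n) 0 - d x 0) \<longlonglongrightarrow> 0"
    by (intro Lim_null_comparison[OF _ assms] always_eventually) simp
  then show ?thesis by (rule LIM_zero_cancel)
qed

sublocale M: Metric_space UNIV d
  by unfold_locales (simp_all add: d_commute d_triangle)

lemma mcomplete: M.mcomplete
  unfolding M.mcomplete_def M.MCauchy_def
proof (intro allI impI)
  fix \<sigma> :: "nat \<Rightarrow> 'a"
  assume "range \<sigma> \<subseteq> UNIV \<and> (\<forall>e>0. \<exists>N. \<forall>n n'. N \<le> n \<longrightarrow> N \<le> n' \<longrightarrow> d (\<sigma> n) (\<sigma> n') < e)"
  then have "\<forall>e>0. \<exists>N. \<forall>m\<ge>N. \<forall>n\<ge>N. d (\<sigma> m) (\<sigma> n) < e"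
    by meson
  moreover have "\<forall>s::nat \<Rightarrow> 'a. (\<forall>e>0. \<exists>N. \<forall>m\<ge>N. \<forall>n\<ge>N. d (s m) (s n) < e)
      \<longrightarrow> (\<exists>l. (\<lambda>n. d (s n) l) \<longlonglongrightarrow> 0)"
    using F_space unfolding F_space_def by (rule conjunct2)
  ultimately obtain l where "(\<lambda>n. d (\<sigma> n) l) \<longlonglongrightarrow> 0" by blast
  then have "\<forall>e>0. \<exists>N. \<forall>n\<ge>N. d (\<sigma> n) l < e"
    unfolding LIMSEQ_iff by simp
  then show "\<exists>l. limitin M.mtopology \<sigma> l sequentially"
    unfolding M.limit_metric_sequentially by blast
qed

lemma Edist_le: "a \<in> A \<Longrightarrow> Edist d x A \<le> d x a"
  unfolding Edist_def by (rule cINF_lower) (auto intro: bdd_belowI[of _ 0])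

lemma Edist_greatest: "A \<noteq> {} \<Longrightarrow> (\<And>a. a \<in> A \<Longrightarrow> c \<le> d x a) \<Longrightarrow> c \<le> Edist d x A"
  unfolding Edist_def by (rule cINF_greatest)

lemma Edist_nonneg: "A \<noteq> {} \<Longrightarrow> 0 \<le> Edist d x A"
  by (rule Edist_greatest) auto

lemma Edist_less_iff: "A \<noteq> {} \<Longrightarrow> Edist d x A < e \<longleftrightarrow> (\<exists>a\<in>A. d x a < e)"
  unfolding Edist_def by (rule cINF_less_iff) (auto intro: bdd_belowI[of _ 0])

lemma Edist_le_Edist_add_d:
  assumes "A \<noteq> {}"
  shows "Edist d x A \<le> Edist d y A + d x y"
proof -
  have "Edist d x A - d x y \<le> Edist d y A"
  proof (rule Edist_greatest[OF assms])
    fix a assume "a \<in> A"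
    then have "Edist d x A \<le> d x a" by (rule Edist_le)
    also have "\<dots> \<le> d x y + d y a" by (rule d_triangle)
    finally show "Edist d x A - d x y \<le> d y a" by simp
  qed
  then show ?thesis by simp
qed

lemma Edist_diff_le:
  assumes "subspace A"
  shows "Edist d (y - z) A \<le> Edist d y A + Edist d z A"
proof -
  have ne: "A \<noteq> {}" using assms subspace_0 by blast
  have "Edist d (y - z) A - Edist d z A \<le> Edist d y A"
  proof (rule Edist_greatest[OF ne])
    fix a assume a: "a \<in> A"
    have "Edist d (y - z) A - d y a \<le> Edist d z A"
    proof (rule Edist_greatest[OF ne])
      fix b assume b: "b \<in> A"
      have "Edist d (y - z) A \<le> d (y - z) (a - b)"
        using a b assms by (intro Edist_le) (simp add: subspace_diff)
      also have "\<dots> = d ((y - a) + (b - z)) 0" by (subst d_eq_d_diff_0) (simp add: algebra_simps)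
      also have "\<dots> \<le> d ((y - a) + (b - z)) (0 + (b - z)) + d (- (z - b)) 0"
        using d_triangle by simp
      also have "\<dots> = d y a + d z b"
        by (simp only: d_translate d_uminus_0 d_eq_d_diff_0[of y a] d_eq_d_diff_0[of z b])
      finally show "Edist d (y - z) A - d y a \<le> d z b" by simp
    qed
    then show "Edist d (y - z) A - Edist d z A \<le> d y a" by simp
  qed
  then show ?thesis by simp
qed

lemma Edist_diff_member:
  assumes A: "subspace A" "a \<in> A"
  shows "Edist d (x - a) A = Edist d x A"
proof -
  have ne: "A \<noteq> {}" using A by blast
  have shift: "d (x - a) b = d x (b + a)" for b
    using d_translate[of "x - a" a b] by simp
  show ?thesis
  proof (rule antisym)
    show "Edist d (x - a) A \<le> Edist d x A"
    proof (rule Edist_greatest[OF ne])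
      fix b assume "b \<in> A"
      then have "Edist d (x - a) A \<le> d (x - a) (b - a)"
        using A by (intro Edist_le) (simp add: subspace_diff)
      then show "Edist d (x - a) A \<le> d x b" by (simp add: shift)
    qed
    show "Edist d x A \<le> Edist d (x - a) A"
    proof (rule Edist_greatest[OF ne])
      fix b assume "b \<in> A"
      then have "Edist d x A \<le> d x (b + a)"
        using A by (intro Edist_le) (simp add: subspace_add)
      then show "Edist d x A \<le> d (x - a) b" by (simp add: shift)
    qed
  qed
qed

lemma continuous_on_Edist_scaleR:
  assumes "A \<noteq> {}"
  shows "continuous_on S (\<lambda>t. Edist d (t *\<^sub>R y) A)"
proof (rule continuous_on_sequentiallyI)
  fix u :: "nat \<Rightarrow> real" and a assume "u \<longlonglongrightarrow> a"
  then have lim: "(\<lambda>k. d (u k *\<^sub>R y) (a *\<^sub>R y)) \<longlonglongrightarrow> 0" by (rule tendsto_d_scaleR_const)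
  have "\<bar>Edist d (u k *\<^sub>R y) A - Edist d (a *\<^sub>R y) A\<bar> \<le> d (u k *\<^sub>R y) (a *\<^sub>R y)" for k
    using Edist_le_Edist_add_d[OF assms, of "u k *\<^sub>R y" "a *\<^sub>R y"]
      Edist_le_Edist_add_d[OF assms, of "a *\<^sub>R y" "u k *\<^sub>R y"] d_commute[of "a *\<^sub>R y"] by simp
  then have "(\<lambda>k. Edist d (u k *\<^sub>R y) A - Edist d (a *\<^sub>R y) A) \<longlonglongrightarrow> 0"
    by (intro Lim_null_comparison[OF _ lim] always_eventually) simp
  then show "(\<lambda>k. Edist d (u k *\<^sub>R y) A) \<longlonglongrightarrow> Edist d (a *\<^sub>R y) A"
    by (rule LIM_zero_cancel)
qed

lemma closedin_Edist_le:
  assumes A: "A \<noteq> {}"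
  shows "closedin M.mtopology {x. Edist d x A \<le> r}"
  unfolding M.metric_closedin_iff_sequentially_closed
proof (intro conjI allI impI subset_UNIV)
  fix \<sigma> l assume \<sigma>: "range \<sigma> \<subseteq> {x. Edist d x A \<le> r} \<and> limitin M.mtopology \<sigma> l sequentially"
  show "l \<in> {x. Edist d x A \<le> r}"
  proof (rule ccontr)
    assume "l \<notin> {x. Edist d x A \<le> r}"
    then have "Edist d l A - r > 0" by simp
    with \<sigma> obtain K where "d (\<sigma> K) l < Edist d l A - r"
      unfolding M.limit_metric_sequentially by blast
    moreover have "Edist d (\<sigma> K) A \<le> r" using \<sigma> by auto
    ultimately show False
      using Edist_le_Edist_add_d[OF A, of l "\<sigma> K"] d_commute[of l "\<sigma> K"] by linarith
  qed
qed

lemma normalized_combinations_convergent_subseq: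
  fixes \<alpha> :: "nat \<Rightarrow> 'a \<Rightarrow> real"
  assumes S: "finite S" "independent S" and pos: "\<And>k. 0 < (\<Sum>x\<in>S. \<bar>\<alpha> k x\<bar>)"
  obtains r u where "strict_mono r" "u \<in> span S" "u \<noteq> 0"
    "(\<lambda>k. d ((1 / (\<Sum>x\<in>S. \<bar>\<alpha> (r k) x\<bar>)) *\<^sub>R (\<Sum>x\<in>S. \<alpha> (r k) x *\<^sub>R x)) u) \<longlonglongrightarrow> 0"
proof -
  define \<gamma> where "\<gamma> k x = \<alpha> k x / (\<Sum>x\<in>S. \<bar>\<alpha> k x\<bar>)" for k x
  have \<gamma>_sum: "(\<Sum>x\<in>S. \<bar>\<gamma> k x\<bar>) = 1" for k
    using pos[of k] by (simp add: \<gamma>_def sum_divide_distrib[symmetric])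
  have bounded: "\<bar>\<gamma> k x\<bar> \<le> 1" if "x \<in> S" for k x
    using member_le_sum[of x S "\<lambda>x. \<bar>\<gamma> k x\<bar>"] that S \<gamma>_sum[of k] by simp
  obtain r where r: "strict_mono r" "\<And>x. x \<in> S \<Longrightarrow> convergent (\<lambda>k. \<gamma> (r k) x)"
    using bounded_family_convergent_subseq[of S \<gamma> 1] S(1) bounded by blast
  define g where "g x = lim (\<lambda>k. \<gamma> (r k) x)" for x
  have g: "(\<lambda>k. \<gamma> (r k) x) \<longlonglongrightarrow> g x" if "x \<in> S" for x
    using r(2)[OF that] unfolding g_def by (rule convergent_LIMSEQ_iff[THEN iffD1])
  have "(\<lambda>k. \<Sum>x\<in>S. \<bar>\<gamma> (r k) x\<bar>) \<longlonglongrightarrow> (\<Sum>x\<in>S. \<bar>g x\<bar>)"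
    by (intro tendsto_sum tendsto_rabs g)
  then have g_sum: "(\<Sum>x\<in>S. \<bar>g x\<bar>) = 1" using \<gamma>_sum by (simp add: LIMSEQ_const_iff)
  define u where "u = (\<Sum>x\<in>S. g x *\<^sub>R x)"
  show ?thesis
  proof
    show "strict_mono r" by (fact r)
    show "u \<in> span S" unfolding u_def by (intro span_sum span_scale span_base)
    show "u \<noteq> 0"
    proof
      assume "u = 0"
      then have "\<forall>x\<in>S. g x = 0" using S dependent_finite unfolding u_def by blast
      with g_sum show False by simp
    qed
    have "(1 / (\<Sum>x\<in>S. \<bar>\<alpha> k x\<bar>)) *\<^sub>R (\<Sum>x\<in>S. \<alpha> k x *\<^sub>R x) = (\<Sum>x\<in>S. \<gamma> k x *\<^sub>R x)" for k
      by (simp add: \<gamma>_def scaleR_sum_right)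
    with tendsto_d_sum[OF S(1) g]
    show "(\<lambda>k. d ((1 / (\<Sum>x\<in>S. \<bar>\<alpha> (r k) x\<bar>)) *\<^sub>R (\<Sum>x\<in>S. \<alpha> (r k) x *\<^sub>R x)) u) \<longlonglongrightarrow> 0"
      unfolding u_def by (simp only:)
  qed
qed

lemma d_scaleR_limit_le:
  fixes a :: "nat \<Rightarrow> real"
  assumes lim: "(\<lambda>k. d (a k *\<^sub>R z k) u) \<longlonglongrightarrow> 0" and "a \<longlonglongrightarrow> 0"
    and "\<And>k. 0 \<le> a k" and "\<forall>\<^sub>F k in sequentially. d (z k) 0 \<le> c" and "0 \<le> t"
  shows "d (t *\<^sub>R u) 0 \<le> c"
proof (rule tendsto_upperbound)
  have "(\<lambda>k. d (t *\<^sub>R (a k *\<^sub>R z k)) (t *\<^sub>R u)) \<longlonglongrightarrow> 0"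
    using tendsto_d_scaleR[OF tendsto_const lim] .
  then show "(\<lambda>k. d ((t * a k) *\<^sub>R z k) 0) \<longlonglongrightarrow> d (t *\<^sub>R u) 0"
    by (simp add: tendsto_d_0)
  have "\<forall>\<^sub>F k in sequentially. t * a k < 1"
    using \<open>a \<longlonglongrightarrow> 0\<close> by (auto intro!: order_tendstoD tendsto_mult_right_zero)
  with \<open>\<forall>\<^sub>F k in sequentially. d (z k) 0 \<le> c\<close>
  show "\<forall>\<^sub>F k in sequentially. d ((t * a k) *\<^sub>R z k) 0 \<le> c"
  proof eventually_elim
    case (elim k)
    have "d ((t * a k) *\<^sub>R z k) 0 \<le> d (1 *\<^sub>R z k) 0"
      using elim \<open>0 \<le> t\<close> \<open>0 \<le> a k\<close> by (intro d_scaleR_mono) auto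
    with elim show ?case by simp
  qed
qed simp

lemma exists_far_point:
  assumes B: "finite B" and v: "v \<notin> span B"
    and long: "\<And>u. u \<in> span (insert v B) \<Longrightarrow> u \<noteq> 0 \<Longrightarrow> \<exists>t>0. c < d (t *\<^sub>R u) 0"
  shows "\<exists>y. c \<le> Edist d y (span B)"
proof (rule ccontr)
  assume "\<nexists>y. c \<le> Edist d y (span B)"
  then have "\<exists>b\<in>span B. d (real k *\<^sub>R v) b < c" for k
    using Edist_less_iff[of "span B"] by (metis not_le span_zero empty_iff)
  then obtain a where a: "\<And>k. a k \<in> span B" "\<And>k. d (real k *\<^sub>R v) (a k) < c"
    by metis
  obtain C where C: "C \<subseteq> B" "independent C" "B \<subseteq> span C"
    by (rule maximal_independent_subset)
  have span_C: "span C = span B"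
    unfolding span_eq using C span_superset by blast
  define S where "S = insert v C"
  have v_C: "v \<notin> C" using v span_C span_base by blast
  have fin_C: "finite C" using B C(1) finite_subset by blast
  have S: "finite S" "independent S"
    unfolding S_def using fin_C C(2) v span_C by (simp_all add: independent_insertI)
  have "(1 / real k) *\<^sub>R a k \<in> span C" for k
    using a(1) span_C by (simp add: span_scale)
  then have "\<exists>\<beta>. (1 / real k) *\<^sub>R a k = (\<Sum>x\<in>C. \<beta> x *\<^sub>R x)" for k
    unfolding span_finite[OF fin_C] by auto
  then obtain \<beta> where \<beta>: "\<And>k. (1 / real k) *\<^sub>R a k = (\<Sum>x\<in>C. \<beta> k x *\<^sub>R x)"
    by metis
  \<comment> \<open>\<open>\<alpha> k\<close> are the coordinates of \<open>v - a k / k\<close> in the basis \<open>S\<close>; since the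
    \<open>v\<close>-coordinate is 1, their l1-norm \<open>M k\<close> is at least 1.\<close>
  define \<alpha> where "\<alpha> k x = (if x = v then 1 else - \<beta> k x)" for k x
  define M where "M k = (\<Sum>x\<in>S. \<bar>\<alpha> k x\<bar>)" for k
  have comb: "(\<Sum>x\<in>S. \<alpha> k x *\<^sub>R x) = v - (1 / real k) *\<^sub>R a k" for k
  proof -
    have "(\<Sum>x\<in>C. \<alpha> k x *\<^sub>R x) = - (\<Sum>x\<in>C. \<beta> k x *\<^sub>R x)"
      using v_C by (auto simp: \<alpha>_def sum_negf[symmetric] intro!: sum.cong)
    then show ?thesis
      unfolding S_def using S v_C \<beta>[of k] by (simp add: S_def \<alpha>_def)
  qed
  have M_ge_1: "1 \<le> M k" for k
    using member_le_sum[of v S "\<lambda>x. \<bar>\<alpha> k x\<bar>"] S unfolding M_def S_def by (simp add: \<alpha>_def)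
  then have "0 < (\<Sum>x\<in>S. \<bar>\<alpha> k x\<bar>)" for k
    unfolding M_def by (meson less_le_trans zero_less_one)
  then obtain r u where r: "strict_mono r" and u: "u \<in> span S" "u \<noteq> 0"
    and lim: "(\<lambda>k. d ((1 / M (r k)) *\<^sub>R (\<Sum>x\<in>S. \<alpha> (r k) x *\<^sub>R x)) u) \<longlonglongrightarrow> 0"
    unfolding M_def by (rule normalized_combinations_convergent_subseq[OF S])
  note lim = lim[unfolded comb]
  have r_pos: "\<forall>\<^sub>F k in sequentially. 0 < r k"
    using eventually_ge_at_top[of 1] by eventually_elim (metis le_trans less_one not_le seq_suble[OF r])
  have short: "d (t *\<^sub>R u) 0 \<le> c" if "0 \<le> t" for t
  proof (rule d_scaleR_limit_le[OF _ _ _ _ that])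
    have "\<forall>\<^sub>F k in sequentially. d ((1 / M (r k)) *\<^sub>R (v - (1 / real (r k)) *\<^sub>R a (r k))) u
        = d ((1 / (M (r k) * real (r k))) *\<^sub>R (real (r k) *\<^sub>R v - a (r k))) u"
      using r_pos by eventually_elim (simp add: scaleR_diff_right)
    then show "(\<lambda>k. d ((1 / (M (r k) * real (r k))) *\<^sub>R (real (r k) *\<^sub>R v - a (r k))) u) \<longlonglongrightarrow> 0"
      by (rule Lim_transform_eventually[OF lim])
    have bound: "norm (1 / (M (r k) * real (r k))) \<le> 1 / real (r k)" for k
      using M_ge_1[of "r k"] by (simp add: divide_simps mult_le_cancel_right1)
    have "(\<lambda>k. 1 / real (r k)) \<longlonglongrightarrow> 0"
      using LIMSEQ_subseq_LIMSEQ[OF lim_1_over_n r] by (simp add: o_def)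
    then show "(\<lambda>k. 1 / (M (r k) * real (r k))) \<longlonglongrightarrow> 0"
      by (rule Lim_null_comparison[OF always_eventually[OF allI[OF bound]]])
    show "0 \<le> 1 / (M (r k) * real (r k))" for k
      using M_ge_1[of "r k"] by simp
    show "\<forall>\<^sub>F k in sequentially. d (real (r k) *\<^sub>R v - a (r k)) 0 \<le> c"
      using a(2) by (intro always_eventually allI) (simp add: d_eq_d_diff_0[symmetric] less_imp_le)
  qed
  have "u \<in> span (insert v B)"
    using u(1) C(1) span_mono[of S "insert v B"] unfolding S_def by blast
  then obtain t where "0 < t" "c < d (t *\<^sub>R u) 0"
    using long u(2) by blast
  with short[of t] show False by simp
qed

lemma exists_short_vector_with_Edist_eq:
  assumes A: "subspace A" and "0 < \<eta>" "\<eta> \<le> Edist d y A"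
  shows "\<exists>z. d z 0 < 2 * \<eta> \<and> Edist d z A = \<eta>"
proof -
  have ne: "A \<noteq> {}" using A subspace_0 by blast
  have "Edist d (0 *\<^sub>R y) A \<le> \<eta>"
    using Edist_le[OF subspace_0[OF A], of 0] \<open>0 < \<eta>\<close> by simp
  with assms obtain t where t: "Edist d (t *\<^sub>R y) A = \<eta>"
    using IVT'[of "\<lambda>t. Edist d (t *\<^sub>R y) A" 0 \<eta> 1] continuous_on_Edist_scaleR[OF ne] by auto
  moreover obtain a where a: "a \<in> A" "d (t *\<^sub>R y) a < 2 * \<eta>"
    using Edist_less_iff[OF ne, of "t *\<^sub>R y" "2 * \<eta>"] t \<open>0 < \<eta>\<close> by auto
  ultimately show ?thesis
    using Edist_diff_member[OF A a(1)] d_eq_d_diff_0[of "t *\<^sub>R y" a]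
    by (intro exI[of _ "t *\<^sub>R y - a"]) simp
qed

lemma uniform_Edist_bound_near_0:
  fixes X :: "nat \<Rightarrow> 'a set" and eps :: "nat \<Rightarrow> real"
  assumes sub: "\<And>n. subspace (X n)" and eps: "\<And>n. 0 \<le> eps n"
    and bigO: "\<And>x. (\<lambda>n. Edist d x (X n)) \<in> O(eps)"
  obtains C N \<rho> where "0 < \<rho>" "\<And>z n. d z 0 < \<rho> \<Longrightarrow> N \<le> n \<Longrightarrow> Edist d z (X n) \<le> C * eps n"
proof -
  have ne: "X n \<noteq> {}" for n using sub[of n] subspace_0 by blast
  define G where "G = (\<lambda>(C::nat, N). \<Inter>n\<in>{N..}. {x. Edist d x (X n) \<le> real C * eps n})"
  have closed: "closedin M.mtopology (G p)" for p
    unfolding G_def by (auto simp: case_prod_beta intro!: closedin_Inter closedin_Edist_le ne)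
  have cover: "(\<Union>p. G p) = UNIV"
  proof (intro set_eqI iffI UNIV_I)
    fix x :: 'a
    obtain K where "\<forall>\<^sub>F n in sequentially. norm (Edist d x (X n)) \<le> K * norm (eps n)"
      using bigO[of x] by (elim landau_o.bigE)
    then obtain N where N: "\<And>n. N \<le> n \<Longrightarrow> Edist d x (X n) \<le> K * eps n"
      unfolding eventually_sequentially using eps Edist_nonneg[OF ne] by force
    have "K * eps n \<le> real (nat \<lceil>K\<rceil>) * eps n" for n
      using eps[of n] by (intro mult_right_mono) linarith+
    then have "x \<in> G (nat \<lceil>K\<rceil>, N)" unfolding G_def using N by (auto intro: order_trans)
    then show "x \<in> (\<Union>p. G p)" by blast
  qed
  \<comment> \<open>By Baire, one of the closed sets \<open>G p\<close> covering the space contains a ball; the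
    differences of its points with its centre fill a ball around 0.\<close>
  have "\<exists>p. M.mtopology interior_of G p \<noteq> {}"
  proof (rule ccontr)
    assume "\<nexists>p. M.mtopology interior_of G p \<noteq> {}"
    then have "M.mtopology interior_of \<Union>(range G) = {}"
      using closed by (intro M.metric_Baire_category_alt[OF mcomplete]) auto
    with cover show False
      using interior_of_topspace[of M.mtopology] M.topspace_mtopology by simp
  qed
  then obtain C N x0 where "x0 \<in> M.mtopology interior_of G (C, N)" by auto
  then obtain \<rho> where \<rho>: "0 < \<rho>" "M.mball x0 \<rho> \<subseteq> G (C, N)"
    using interior_of_subset[of M.mtopology] M.openin_mtopology[THEN iffD1, OF openin_interior_of]
    by (metis subset_trans)
  show ?thesis
  proof (rule that[OF \<open>0 < \<rho>\<close>])
    fix z n assume "d z 0 < \<rho>" "N \<le> n"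
    moreover have "d x0 (x0 + z) = d z 0"
      using d_translate[of 0 x0 z] d_commute[of 0 z] by (simp add: add.commute)
    ultimately have "x0 \<in> G (C, N)" "x0 + z \<in> G (C, N)" using \<rho> by auto
    then have "Edist d (x0 + z) (X n) \<le> real C * eps n" "Edist d x0 (X n) \<le> real C * eps n"
      using \<open>N \<le> n\<close> unfolding G_def by auto
    with Edist_diff_le[OF sub, of "x0 + z" x0 n]
    show "Edist d z (X n) \<le> (2 * real C) * eps n" by simp
  qed
qed

lemma satisfies_Shapiro_if_far_points:
  fixes X :: "nat \<Rightarrow> 'a set"
  assumes sub: "\<And>n. subspace (X n)" and "0 < c" and far: "\<And>n. \<exists>y. c \<le> Edist d y (X n)"
  shows "satisfies_Shapiro d X"
  unfolding satisfies_Shapiro_def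
proof (intro allI impI)
  fix eps :: "nat \<Rightarrow> real"
  assume eps: "decseq eps \<and> (\<forall>n. 0 \<le> eps n) \<and> eps \<longlonglongrightarrow> 0"
  show "\<exists>x. (\<lambda>n. Edist d x (X n)) \<notin> O(eps)"
  proof (rule ccontr)
    assume "\<nexists>x. (\<lambda>n. Edist d x (X n)) \<notin> O(eps)"
    then have bigO: "(\<lambda>n. Edist d x (X n)) \<in> O(eps)" for x by blast
    obtain C N \<rho> where \<rho>: "0 < \<rho>"
      and near_0: "\<And>z n. d z 0 < \<rho> \<Longrightarrow> N \<le> n \<Longrightarrow> Edist d z (X n) \<le> C * eps n"
      by (rule uniform_Edist_bound_near_0[of X eps, OF sub _ bigO]) (use eps in auto)
    define \<eta> where "\<eta> = min c \<rho> / 2"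
    have \<eta>: "0 < \<eta>" "\<eta> \<le> c" "2 * \<eta> \<le> \<rho>" using \<open>0 < c\<close> \<rho> unfolding \<eta>_def by auto
    have "(\<lambda>n. C * eps n) \<longlonglongrightarrow> 0"
      using eps tendsto_mult_right_zero by blast
    then obtain n where "N \<le> n" "C * eps n < \<eta>"
      using \<eta>(1) eventually_ge_at_top[of N] order_tendstoD(2)
      by (metis (mono_tags, lifting) eventually_conj eventually_sequentially order.refl)
    moreover obtain y where "c \<le> Edist d y (X n)" using far by blast
    with \<eta>(2) have "\<eta> \<le> Edist d y (X n)" by linarith
    then obtain z where "d z 0 < 2 * \<eta>" "Edist d z (X n) = \<eta>"
      using exists_short_vector_with_Edist_eq[OF sub \<eta>(1)] by blast
    ultimately show False using near_0[of z n] \<eta>(3) by linarith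
  qed
qed

end

theorem mainTheorem3:
  fixes d :: "'a::real_vector \<Rightarrow> 'a \<Rightarrow> real" and X :: "nat \<Rightarrow> 'a set"
  assumes "F_space d"
    and "nondecreasing_metric d"
    and "nontrivial_linear_approx_scheme d X"
    and "\<And>n. \<exists>B. finite B \<and> X n = span B"
    and "radius (\<lambda>x. d x 0) (\<Union>n. X n) > 0"
  shows "(INF n. Edist_space d (X n)) > 0 \<and> satisfies_Shapiro d X"
proof -
  interpret nondecreasing_F_space d using assms(1,2) by unfold_locales
  have sub: "\<And>n. subspace (X n)" and strict: "\<And>n. X n \<subset> X (Suc n)"
    using assms(3) unfolding nontrivial_linear_approx_scheme_def by blast+
  obtain c where "0 < ereal c" and c: "ereal c < radius (\<lambda>x. d x 0) (\<Union>n. X n)"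
    using ereal_dense2[OF assms(5)] by blast
  have far: "\<exists>y. c \<le> Edist d y (X n)" for n
  proof -
    obtain B where B: "finite B" "X n = span B" using assms(4) by blast
    obtain v where v: "v \<in> X (Suc n)" "v \<notin> X n" using strict[of n] by blast
    have "span (insert v B) \<subseteq> X (Suc n)"
      using B(2) v(1) strict[of n] span_superset[of B] by (intro span_minimal[OF _ sub]) auto
    then have "\<exists>t>0. c < d (t *\<^sub>R u) 0" if "u \<in> span (insert v B)" "u \<noteq> 0" for u
      using that by (intro radius_gt_imp_exists_scaleR_gt[OF c]) auto
    with exists_far_point[OF B(1)] v(2) B(2) show ?thesis by simp
  qed
  have "ereal c \<le> (INF n. Edist_space d (X n))"
    unfolding Edist_space_def using far by (intro INF_greatest) (meson SUP_upper2 UNIV_I ereal_less_eq(3))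
  moreover have "satisfies_Shapiro d X"
    using \<open>0 < ereal c\<close> by (intro satisfies_Shapiro_if_far_points[of X, OF sub _ far]) simp
  ultimately show ?thesis
    using \<open>0 < ereal c\<close> by (meson less_le_trans)
qed

end
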